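(* Let $\mathcal{X}$ be a compact subset of a Euclidean space, $k$ a continuous positive definite kernel on $\mathcal{X}$ with RKHS $\mathcal{H}_k$ and closed unit ball $\mathcal{H}_k^1$, $\rho$ a Borel probability measure on $\mathcal{X}$, and $(\lambda_l)_{l\ge1}$ the eigenvalues of $(K_\rho g)(x)=\int_{\mathcal{X}}k(x,x')g(x')\,d\rho(x')$ on $L^2(\rho)$ in nonincreasing order with multiplicity (padded with zeros if finitely many are nonzero). Then for any $n\ge1$ and $x_1,\dots,x_n\in\mathcal{X}$, $$\mathbb{E}_{x\sim\rho}\Big[\sup_{f\in\mathcal{H}_k^1,\ f(x_1)=\dots=f(x_n)=0}|f(x)|^2\Big]\ge\sum_{l=n+1}^\infty\lambda_l.$$
   Context: A continuous positive definite kernel $k$ on $\mathcal{X}$ is a continuous symmetric function with $\sum_{i,j}a_ia_jk(x_i,x_j)\ge0$ for all finite families; $\mathcal{H}_k$ is the associated reproducing kernel Hilbert space, with reproducing property $f(x)=\langle f,k(x,\cdot)\rangle_{\mathcal{H}_k}$. *)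

theory Defs
  imports "HOL-Probability.Probability"
begin

definition pd_kernel :: "'a::topological_space set \<Rightarrow> ('a \<Rightarrow> 'a \<Rightarrow> real) \<Rightarrow> bool" where
  "pd_kernel X k \<longleftrightarrow>
     continuous_on (X \<times> X) (\<lambda>(x, y). k x y) \<and>
     (\<forall>x\<in>X. \<forall>y\<in>X. k x y = k y x) \<and>
     (\<forall>m (a :: nat \<Rightarrow> real) (z :: nat \<Rightarrow> 'a). (\<forall>i<m. z i \<in> X) \<longrightarrow>
        0 \<le> (\<Sum>i<m. \<Sum>j<m. a i * a j * k (z i) (z j)))"

text \<open>Elements of the pre-RKHS span{k(y,.)}: finite representations
  (coefficients c, centres y, length m), i.e. sum_{i<m} c_i k(y_i, .).\<close>
type_synonym 'a krep = "(nat \<Rightarrow> real) \<times> (nat \<Rightarrow> 'a) \<times> nat"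

definition krep_in :: "'a set \<Rightarrow> 'a krep \<Rightarrow> bool" where
  "krep_in X r \<longleftrightarrow> (case r of (c, y, m) \<Rightarrow> \<forall>i<m. y i \<in> X)"

definition krep_eval :: "('a \<Rightarrow> 'a \<Rightarrow> real) \<Rightarrow> 'a krep \<Rightarrow> 'a \<Rightarrow> real" where
  "krep_eval k r x = (case r of (c, y, m) \<Rightarrow> \<Sum>i<m. c i * k (y i) x)"

definition krep_ip :: "('a \<Rightarrow> 'a \<Rightarrow> real) \<Rightarrow> 'a krep \<Rightarrow> 'a krep \<Rightarrow> real" where
  "krep_ip k r s = (case r of (c, y, m) \<Rightarrow> case s of (d, z, p) \<Rightarrow>
      \<Sum>i<m. \<Sum>j<p. c i * d j * k (y i) (z j))"

definition krep_dist2 :: "('a \<Rightarrow> 'a \<Rightarrow> real) \<Rightarrow> 'a krep \<Rightarrow> 'a krep \<Rightarrow> real" where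
  "krep_dist2 k r s = krep_ip k r r - 2 * krep_ip k r s + krep_ip k s s"

text \<open>Closed unit ball of the RKHS H_k on X (Moore--Aronszajn construction):
  f is a pointwise (on X) limit of a Cauchy sequence in span{k(y,.) : y in X},
  and its RKHS norm (the limit of the norms) is at most 1.\<close>
definition rkhs_ball :: "'a set \<Rightarrow> ('a \<Rightarrow> 'a \<Rightarrow> real) \<Rightarrow> ('a \<Rightarrow> real) set" where
  "rkhs_ball X k = {f. \<exists>F :: nat \<Rightarrow> 'a krep.
      (\<forall>n. krep_in X (F n)) \<and>
      (\<forall>e>0. \<exists>N. \<forall>p\<ge>N. \<forall>q\<ge>N. krep_dist2 k (F p) (F q) < e) \<and>
      (\<forall>x\<in>X. (\<lambda>n. krep_eval k (F n) x) \<longlonglongrightarrow> f x) \<and>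
      (\<exists>L\<le>1. (\<lambda>n. krep_ip k (F n) (F n)) \<longlonglongrightarrow> L)}"

definition eigen_onfamily :: "('a \<Rightarrow> 'a \<Rightarrow> real) \<Rightarrow> 'a measure \<Rightarrow> real \<Rightarrow> nat \<Rightarrow> (nat \<Rightarrow> 'a \<Rightarrow> real) \<Rightarrow> bool" where
  "eigen_onfamily k rho mu m g \<longleftrightarrow>
     (\<forall>i<m. g i \<in> borel_measurable rho \<and> integrable rho (\<lambda>x. (g i x)\<^sup>2) \<and>
        (AE x in rho. (\<integral>y. k x y * g i y \<partial>rho) = mu * g i x)) \<and>
     (\<forall>i<m. \<forall>j<m. (\<integral>x. g i x * g j x \<partial>rho) = (if i = j then 1 else 0))"

text \<open>mu is an eigenvalue of K_rho on L^2(rho) of multiplicity exactly m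
  (dimension of the eigenspace; m = 0 means mu is not an eigenvalue).\<close>
definition eigen_mult :: "('a \<Rightarrow> 'a \<Rightarrow> real) \<Rightarrow> 'a measure \<Rightarrow> real \<Rightarrow> nat \<Rightarrow> bool" where
  "eigen_mult k rho mu m \<longleftrightarrow>
     (\<exists>g. eigen_onfamily k rho mu m g) \<and> \<not> (\<exists>g. eigen_onfamily k rho mu (Suc m) g)"

text \<open>lam 0, lam 1, ... are the eigenvalues lambda_1, lambda_2, ... of K_rho in
  nonincreasing order, repeated with multiplicity, padded with zeros.
  (K_rho is a positive operator, so all nonzero eigenvalues are positive.)\<close>
definition kernel_eigenvalues :: "('a \<Rightarrow> 'a \<Rightarrow> real) \<Rightarrow> 'a measure \<Rightarrow> (nat \<Rightarrow> real) \<Rightarrow> bool" where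
  "kernel_eigenvalues k rho lam \<longleftrightarrow>
     antimono lam \<and> (\<forall>l. 0 \<le> lam l) \<and>
     (\<forall>mu>0. finite {l. lam l = mu} \<and> eigen_mult k rho mu (card {l. lam l = mu}))"

end

theory Submission
  imports Defs
begin

text \<open>Let \<open>\<psi>\<^sub>l\<close> be continuous orthonormal eigenfunctions of \<open>K\<^sub>\<rho>\<close> for the positive eigenvalues
  \<open>\<lambda>\<^sub>l\<close>, \<open>l < N\<close>. For \<open>h \<in> L\<^sup>1(\<rho>)\<close> the function \<open>K\<^sub>\<rho> h\<close> lies in \<open>H\<^sub>k\<close> with squared norm
  \<open>\<integral> h K\<^sub>\<rho> h d\<rho>\<close> (it is approximated by finite kernel expansions obtained by discretising the
  integral), so every \<open>\<Sum>\<^sub>l b\<^sub>l \<surd>\<lambda>\<^sub>l \<psi>\<^sub>l\<close> with \<open>\<Sum>\<^sub>l b\<^sub>l\<^sup>2 \<le> 1\<close> lies in the unit ball. Choose orthonormal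
  vectors \<open>B\<^sub>n, \<dots>, B\<^sub>N\<^sub>-\<^sub>1\<close> of \<open>\<real>\<^sup>N\<close>, \<open>B\<^sub>m\<close> supported on the first \<open>m + 1\<close> coordinates and orthogonal
  to the \<open>n\<close> vectors \<open>(\<surd>\<lambda>\<^sub>l \<psi>\<^sub>l(x\<^sub>i))\<^sub>l\<close>. At every \<open>x\<close> the supremum over the ball functions vanishing
  at the \<open>x\<^sub>i\<close> is then at least \<open>\<Sum>\<^sub>m (\<Sum>\<^sub>l B\<^sub>m\<^sub>l \<surd>\<lambda>\<^sub>l \<psi>\<^sub>l(x))\<^sup>2\<close>, whose integral is
  \<open>\<Sum>\<^sub>m \<Sum>\<^sub>l B\<^sub>m\<^sub>l\<^sup>2 \<lambda>\<^sub>l \<ge> \<Sum>\<^sub>m \<lambda>\<^sub>m\<close> because \<open>\<lambda>\<close> is nonincreasing. Letting \<open>N\<close> grow gives the tail sum.\<close>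

section \<open>Orthonormal vectors in finite dimension\<close>

lemma homogeneous_system_nontrivial_solution:
  fixes A :: "nat \<Rightarrow> nat \<Rightarrow> real"
  assumes "finite J" "m < card J"
  shows "\<exists>b. (\<forall>j. j \<notin> J \<longrightarrow> b j = 0) \<and> (\<exists>j\<in>J. b j \<noteq> 0) \<and>
    (\<forall>i<m. (\<Sum>j\<in>J. A i j * b j) = 0)"
  using assms
proof (induction m arbitrary: J A)
  case 0
  then obtain j0 where "j0 \<in> J" by fastforce
  then show ?case by (intro exI[of _ "\<lambda>j. if j = j0 then 1 else 0"]) auto
next
  case (Suc m)
  show ?case
  proof (cases "\<forall>j\<in>J. A m j = 0")
    case True
    from Suc.IH[OF Suc.prems(1) Suc_lessD[OF Suc.prems(2)], of A]
    obtain b where b: "\<forall>j. j \<notin> J \<longrightarrow> b j = 0" "\<exists>j\<in>J. b j \<noteq> 0"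
        "\<forall>i<m. (\<Sum>j\<in>J. A i j * b j) = 0"
      by blast
    then have "\<forall>i<Suc m. (\<Sum>j\<in>J. A i j * b j) = 0"
      using True by (auto simp: less_Suc_eq)
    with b show ?thesis by blast
  next
    case False
    then obtain p where p: "p \<in> J" "A m p \<noteq> 0" by blast
    define A' where "A' i j = A i j - A i p * A m j / A m p" for i j
    have "finite (J - {p})" "m < card (J - {p})" using Suc.prems p by auto
    from Suc.IH[OF this, of A']
    obtain b' where b': "\<forall>j. j \<notin> J - {p} \<longrightarrow> b' j = 0" "\<exists>j\<in>J - {p}. b' j \<noteq> 0"
        "\<forall>i<m. (\<Sum>j\<in>J - {p}. A' i j * b' j) = 0"
      by blast
    define S where "S = (\<Sum>j\<in>J - {p}. A m j * b' j)"
    define b where "b = b'(p := - S / A m p)"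
    have split: "(\<Sum>j\<in>J. A i j * b j) = (\<Sum>j\<in>J - {p}. A i j * b' j) - A i p / A m p * S" for i
    proof -
      have "(\<Sum>j\<in>J. A i j * b j) = A i p * b p + (\<Sum>j\<in>J - {p}. A i j * b j)"
        using Suc.prems(1) p(1) by (simp add: sum.remove)
      also have "(\<Sum>j\<in>J - {p}. A i j * b j) = (\<Sum>j\<in>J - {p}. A i j * b' j)"
        unfolding b_def by (intro sum.cong) auto
      finally show ?thesis unfolding b_def by simp
    qed
    have "(\<Sum>j\<in>J. A i j * b j) = 0" if "i < Suc m" for i
    proof (cases "i < m")
      case True
      have "(\<Sum>j\<in>J - {p}. A' i j * b' j) = (\<Sum>j\<in>J - {p}. A i j * b' j) - A i p / A m p * S"
        unfolding A'_def S_def by (simp add: algebra_simps sum_subtractf sum_distrib_left)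
      then show ?thesis using b'(3) True split by simp
    next
      case False
      then have "i = m" using that by simp
      then show ?thesis using split p(2) by (simp add: S_def)
    qed
    moreover have "\<forall>j. j \<notin> J \<longrightarrow> b j = 0" "\<exists>j\<in>J. b j \<noteq> 0"
      using b'(1,2) p(1) unfolding b_def by auto
    ultimately show ?thesis by blast
  qed
qed

lemma orthonormal_triangular_family:
  fixes U :: "nat \<Rightarrow> nat \<Rightarrow> real"
  assumes "N \<le> T"
  shows "\<exists>B. (\<forall>m\<in>{n..<N}. \<forall>l>m. B m l = 0) \<and>
     (\<forall>m\<in>{n..<N}. \<forall>m'\<in>{n..<N}. (\<Sum>l<T. B m l * B m' l) = (if m = m' then 1 else 0)) \<and>
     (\<forall>m\<in>{n..<N}. \<forall>i<n. (\<Sum>l<T. U i l * B m l) = 0)"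
  using assms
proof (induction N)
  case (Suc N)
  then obtain B where B: "\<forall>m\<in>{n..<N}. \<forall>l>m. B m l = 0"
     "\<forall>m\<in>{n..<N}. \<forall>m'\<in>{n..<N}. (\<Sum>l<T. B m l * B m' l) = (if m = m' then 1 else 0)"
     "\<forall>m\<in>{n..<N}. \<forall>i<n. (\<Sum>l<T. U i l * B m l) = 0" by auto
  show ?case
  proof (cases "N < n")
    case True
    then show ?thesis by auto
  next
    case False
    define A where "A i l = (if i < n then U i l else B i l)" for i l
    obtain b where b: "\<forall>j. j \<notin> {..<Suc N} \<longrightarrow> b j = 0" "\<exists>j\<in>{..<Suc N}. b j \<noteq> 0"
        "\<forall>i<N. (\<Sum>j\<in>{..<Suc N}. A i j * b j) = 0"
      using homogeneous_system_nontrivial_solution[of "{..<Suc N}" N A] by auto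
    have restrict: "(\<Sum>l<T. a l * b l) = (\<Sum>l<Suc N. a l * b l)" for a
      using b(1) Suc.prems by (intro sum.mono_neutral_right) auto
    define s where "s = (\<Sum>l<T. b l * b l)"
    have "s > 0"
    proof -
      obtain j where "j < Suc N" "b j \<noteq> 0" using b(2) by auto
      then have "0 < b j * b j" by (simp add: not_square_less_zero less_le)
      also have "\<dots> \<le> (\<Sum>l<Suc N. b l * b l)"
        using \<open>j < Suc N\<close> by (intro member_le_sum) auto
      finally show ?thesis unfolding s_def restrict .
    qed
    define B' where "B' = B(N := (\<lambda>l. b l / sqrt s))"
    have orth_b: "(\<Sum>l<T. A i l * B' N l) = 0" if "i < N" for i
    proof -
      have "(\<Sum>l<T. A i l * B' N l) = (\<Sum>l<T. A i l * b l) / sqrt s"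
        by (simp add: B'_def sum_divide_distrib)
      then show ?thesis using b(3) that by (simp add: restrict)
    qed
    have "(\<Sum>l<T. B' N l * B' N l) = 1"
      using \<open>s > 0\<close> by (simp add: B'_def s_def sum_divide_distrib[symmetric] flip: real_sqrt_mult)
    moreover have "(\<Sum>l<T. B' m l * B' N l) = 0" "(\<Sum>l<T. B' N l * B' m l) = 0" if "m \<in> {n..<N}" for m
      using orth_b[of m] that by (auto simp: A_def B'_def mult.commute)
    ultimately have "\<forall>m\<in>{n..<Suc N}. \<forall>m'\<in>{n..<Suc N}. (\<Sum>l<T. B' m l * B' m' l) = (if m = m' then 1 else 0)"
      using B(2) by (auto simp: B'_def less_Suc_eq)
    moreover have "\<forall>m\<in>{n..<Suc N}. \<forall>l>m. B' m l = 0"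
      using B(1) b(1) by (auto simp: B'_def less_Suc_eq)
    moreover have "\<forall>m\<in>{n..<Suc N}. \<forall>i<n. (\<Sum>l<T. U i l * B' m l) = 0"
    proof (intro ballI allI impI)
      fix m i assume "m \<in> {n..<Suc N}" "i < n"
      then show "(\<Sum>l<T. U i l * B' m l) = 0"
        using B(3) orth_b[of i] False by (cases "m = N") (auto simp: A_def B'_def)
    qed
    ultimately show ?thesis by blast
  qed
qed simp

lemma sum_combination_inner:
  fixes B :: "'m \<Rightarrow> nat \<Rightarrow> real"
  shows "(\<Sum>l<T. (\<Sum>m\<in>M. c m * B m l) * a l) = (\<Sum>m\<in>M. c m * (\<Sum>l<T. B m l * a l))"
  by (simp add: sum_distrib_left sum_distrib_right mult_ac sum.swap[of _ M "{..<T}"])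

lemma sum_combination_square:
  fixes B :: "'m \<Rightarrow> nat \<Rightarrow> real"
  assumes "finite M" and orth: "\<forall>m\<in>M. \<forall>m'\<in>M. (\<Sum>l<T. B m l * B m' l) = (if m = m' then 1 else 0)"
  shows "(\<Sum>l<T. (\<Sum>m\<in>M. c m * B m l)\<^sup>2) = (\<Sum>m\<in>M. (c m)\<^sup>2)"
proof -
  have inner: "(\<Sum>l<T. B m l * (\<Sum>m'\<in>M. c m' * B m' l)) = (\<Sum>m'\<in>M. c m' * (\<Sum>l<T. B m' l * B m l))" for m
    by (subst mult.commute) (rule sum_combination_inner)
  have diag: "(\<Sum>m'\<in>M. c m' * (\<Sum>l<T. B m' l * B m l)) = c m" if "m \<in> M" for m
  proof -
    have "(\<Sum>m'\<in>M. c m' * (\<Sum>l<T. B m' l * B m l)) = (\<Sum>m'\<in>M. if m' = m then c m' else 0)"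
      using orth that by (intro sum.cong refl) simp
    then show ?thesis using \<open>finite M\<close> that by simp
  qed
  have "(\<Sum>l<T. (\<Sum>m\<in>M. c m * B m l)\<^sup>2) = (\<Sum>m\<in>M. c m * (\<Sum>l<T. B m l * (\<Sum>m'\<in>M. c m' * B m' l)))"
    unfolding power2_eq_square by (rule sum_combination_inner)
  also have "\<dots> = (\<Sum>m\<in>M. c m * c m)"
    using diag by (simp add: inner)
  finally show ?thesis by (simp add: power2_eq_square)
qed

lemma orthonormal_span_attains_projection:
  fixes B :: "'m \<Rightarrow> nat \<Rightarrow> real"
  assumes "finite M" and "\<forall>m\<in>M. \<forall>m'\<in>M. (\<Sum>l<T. B m l * B m' l) = (if m = m' then 1 else 0)"
  obtains b where "(\<Sum>l<T. (b l)\<^sup>2) \<le> 1"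
    and "\<And>a. \<forall>m\<in>M. (\<Sum>l<T. B m l * a l) = 0 \<Longrightarrow> (\<Sum>l<T. b l * a l) = 0"
    and "(\<Sum>l<T. b l * u l)\<^sup>2 = (\<Sum>m\<in>M. (\<Sum>l<T. B m l * u l)\<^sup>2)"
proof -
  define w where "w m = (\<Sum>l<T. B m l * u l)" for m
  define W where "W = (\<Sum>m\<in>M. (w m)\<^sup>2)"
  define b where "b l = (\<Sum>m\<in>M. (w m / sqrt W) * B m l)" for l
  have "W \<ge> 0" unfolding W_def by (simp add: sum_nonneg)
  show ?thesis
  proof (rule that)
    have "(\<Sum>l<T. (b l)\<^sup>2) = (\<Sum>m\<in>M. (w m / sqrt W)\<^sup>2)"
      unfolding b_def by (rule sum_combination_square[OF assms])
    also have "\<dots> = (\<Sum>m\<in>M. (w m)\<^sup>2) / W"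
      using \<open>W \<ge> 0\<close> by (simp add: power_divide sum_divide_distrib)
    finally show "(\<Sum>l<T. (b l)\<^sup>2) \<le> 1" by (simp add: W_def[symmetric])
  next
    fix a assume "\<forall>m\<in>M. (\<Sum>l<T. B m l * a l) = 0"
    then show "(\<Sum>l<T. b l * a l) = 0" unfolding b_def sum_combination_inner by simp
  next
    have "(\<Sum>l<T. b l * u l) = (\<Sum>m\<in>M. w m / sqrt W * w m)"
      unfolding b_def sum_combination_inner w_def ..
    also have "\<dots> = W / sqrt W"
      by (simp only: W_def power2_eq_square times_divide_eq_left sum_divide_distrib)
    also have "\<dots> = sqrt W" using \<open>W \<ge> 0\<close> by (simp add: real_div_sqrt)
    finally show "(\<Sum>l<T. b l * u l)\<^sup>2 = (\<Sum>m\<in>M. (\<Sum>l<T. B m l * u l)\<^sup>2)"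
      using \<open>W \<ge> 0\<close> by (simp add: W_def w_def)
  qed
qed

lemma integral_orthonormal_combination:
  fixes g :: "nat \<Rightarrow> 'a \<Rightarrow> real"
  assumes int: "\<And>l l'. l < N \<Longrightarrow> l' < N \<Longrightarrow> integrable M (\<lambda>x. g l x * g l' x)"
    and orth: "\<And>l l'. l < N \<Longrightarrow> l' < N \<Longrightarrow> (\<integral>x. g l x * g l' x \<partial>M) = (if l = l' then 1 else 0)"
  shows "(\<integral>x. (\<Sum>l<N. c l * g l x) * (\<Sum>l<N. d l * g l x) \<partial>M) = (\<Sum>l<N. c l * d l)"
proof -
  have "(\<integral>x. (\<Sum>l<N. c l * g l x) * (\<Sum>l<N. d l * g l x) \<partial>M)
      = (\<integral>x. (\<Sum>l<N. \<Sum>l'<N. c l * d l' * (g l x * g l' x)) \<partial>M)"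
    by (simp add: sum_product mult_ac)
  also have "\<dots> = (\<Sum>l<N. \<Sum>l'<N. (\<integral>x. c l * d l' * (g l x * g l' x) \<partial>M))"
  proof -
    have i: "integrable M (\<lambda>x. c l * d l' * (g l x * g l' x))" if "l \<in> {..<N}" "l' \<in> {..<N}" for l l'
      using int that by (intro Bochner_Integration.integrable_mult_right) auto
    show ?thesis
      by (subst Bochner_Integration.integral_sum, rule Bochner_Integration.integrable_sum, rule i, assumption+)
         (intro sum.cong refl Bochner_Integration.integral_sum i)
  qed
  also have "\<dots> = (\<Sum>l<N. \<Sum>l'<N. c l * d l' * (\<integral>x. g l x * g l' x \<partial>M))"
    by simp
  also have "\<dots> = (\<Sum>l<N. c l * d l)"
  proof (rule sum.cong[OF refl])
    fix l assume "l \<in> {..<N}"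
    then have "(\<Sum>l'<N. c l * d l' * (\<integral>x. g l x * g l' x \<partial>M)) = (\<Sum>l'<N. if l = l' then c l * d l' else 0)"
      using orth by (intro sum.cong) auto
    then show "(\<Sum>l'<N. c l * d l' * (\<integral>x. g l x * g l' x \<partial>M)) = c l * d l"
      using \<open>l \<in> {..<N}\<close> by simp
  qed
  finally show ?thesis .
qed

lemma antimono_index_in_level_set:
  fixes lam :: "nat \<Rightarrow> real"
  assumes anti: "antimono lam" and fin: "finite {j. lam j = lam l}"
  shows "l - (LEAST j. lam j = lam l) < card {j. lam j = lam l}"
proof -
  define s where "s = (LEAST j. lam j = lam l)"
  have "lam s = lam l" "s \<le> l" unfolding s_def by (auto intro: LeastI Least_le)
  have "{s..l} \<subseteq> {j. lam j = lam l}"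
  proof
    fix j assume "j \<in> {s..l}"
    then have "lam j \<le> lam s" "lam l \<le> lam j" using anti by (auto simp: antimono_def)
    then show "j \<in> {j. lam j = lam l}" using \<open>lam s = lam l\<close> by simp
  qed
  then have "card {s..l} \<le> card {j. lam j = lam l}" using fin by (rule card_mono[rotated])
  then show ?thesis using \<open>s \<le> l\<close> by (simp add: s_def)
qed

lemma antimono_le_weighted_sum:
  fixes lam c :: "nat \<Rightarrow> real"
  assumes anti: "antimono lam" and unit: "(\<Sum>l<N. (c l)\<^sup>2) = 1" and support: "\<forall>l>m. c l = 0"
  shows "lam m \<le> (\<Sum>l<N. (c l)\<^sup>2 * lam l)"
proof -
  have "lam m = (\<Sum>l<N. (c l)\<^sup>2 * lam m)"
    using unit by (simp flip: sum_distrib_right)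
  also have "\<dots> \<le> (\<Sum>l<N. (c l)\<^sup>2 * lam l)"
  proof (rule sum_mono)
    fix l
    show "(c l)\<^sup>2 * lam m \<le> (c l)\<^sup>2 * lam l"
    proof (cases "l \<le> m")
      case True
      then have "lam m \<le> lam l" using anti by (simp add: antimono_def)
      then show ?thesis by (simp add: mult_left_mono)
    next
      case False
      then show ?thesis using support by simp
    qed
  qed
  finally show ?thesis .
qed

lemma antimono_positive_prefix:
  fixes lam :: "nat \<Rightarrow> real"
  assumes anti: "antimono lam" and nonneg: "\<And>l. 0 \<le> lam l"
  obtains N' where "\<forall>l<N'. lam l > 0" "(\<Sum>m\<in>{n..<N}. lam m) = (\<Sum>m\<in>{n..<N'}. lam m)"
proof -
  define N' where "N' = (LEAST l. lam l \<le> 0 \<or> l = N)"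
  have "N' \<le> N" unfolding N'_def by (rule Least_le) simp
  have pos: "\<forall>l<N'. lam l > 0" unfolding N'_def using not_less_Least by fastforce
  have "lam m = 0" if "N' \<le> m" "N' < N" for m
  proof -
    have "lam N' \<le> 0" using LeastI[of "\<lambda>l. lam l \<le> 0 \<or> l = N" N] \<open>N' < N\<close> unfolding N'_def by auto
    moreover have "lam m \<le> lam N'" using anti \<open>N' \<le> m\<close> by (simp add: antimono_def)
    ultimately show ?thesis using nonneg[of m] by linarith
  qed
  then have "(\<Sum>m\<in>{n..<N}. lam m) = (\<Sum>m\<in>{n..<N'}. lam m)"
    using \<open>N' \<le> N\<close> by (intro sum.mono_neutral_right) auto
  with pos show ?thesis by (rule that)
qed

lemma rkhs_ballI:
  fixes F :: "nat \<Rightarrow> 'a krep" and e :: "nat \<Rightarrow> real"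
  assumes F: "\<And>n. krep_in X (F n)" and e: "e \<longlonglongrightarrow> 0"
    and eval: "\<And>x n. x \<in> X \<Longrightarrow> \<bar>krep_eval k (F n) x - f x\<bar> \<le> e n"
    and ip: "\<And>p q. \<bar>krep_ip k (F p) (F q) - R\<bar> \<le> e p + e q"
    and "R \<le> 1"
  shows "f \<in> rkhs_ball X k"
  unfolding rkhs_ball_def mem_Collect_eq
proof (intro exI[of _ F] conjI allI ballI impI exI[of _ R])
  fix d :: real assume "d > 0"
  then obtain N where N: "\<And>n. n \<ge> N \<Longrightarrow> \<bar>e n\<bar> < d / 8"
    using LIMSEQ_D[OF e, of "d / 8"] by auto
  show "\<exists>N. \<forall>p\<ge>N. \<forall>q\<ge>N. krep_dist2 k (F p) (F q) < d"
  proof (intro exI[of _ N] allI impI)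
    fix p q assume "p \<ge> N" "q \<ge> N"
    then show "krep_dist2 k (F p) (F q) < d"
      using ip[of p p] ip[of p q] ip[of q q] N[of p] N[of q] unfolding krep_dist2_def by linarith
  qed
next
  fix x assume "x \<in> X"
  have "(\<lambda>n. krep_eval k (F n) x - f x) \<longlonglongrightarrow> 0"
    by (rule Lim_null_comparison[OF _ e]) (use eval[OF \<open>x \<in> X\<close>] in \<open>simp add: always_eventually\<close>)
  then show "(\<lambda>n. krep_eval k (F n) x) \<longlonglongrightarrow> f x" by (simp add: Lim_null[symmetric])
next
  have "(\<lambda>n. krep_ip k (F n) (F n) - R) \<longlonglongrightarrow> 0"
  proof (rule Lim_null_comparison)
    show "\<forall>\<^sub>F n in sequentially. norm (krep_ip k (F n) (F n) - R) \<le> 2 * e n"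
      using ip by (intro always_eventually allI) (metis mult_2 real_norm_def)
    show "(\<lambda>n. 2 * e n) \<longlonglongrightarrow> 0" by (rule tendsto_mult_right_zero[OF e])
  qed
  then show "(\<lambda>n. krep_ip k (F n) (F n)) \<longlonglongrightarrow> R" by (simp add: Lim_null[symmetric])
qed (use F \<open>R \<le> 1\<close> in simp_all)

section \<open>The integral operator\<close>

locale kernel_space =
  fixes X :: "'a::euclidean_space set" and k :: "'a \<Rightarrow> 'a \<Rightarrow> real" and rho :: "'a measure"
  assumes compact_X: "compact X" and pd_kernel: "pd_kernel X k" and prob_space_rho: "prob_space rho"
    and sets_rho: "sets rho = sets (restrict_space borel X)"
begin

sublocale prob_space rho by (fact prob_space_rho)

lemma space_rho: "space rho = X"
  using sets_eq_imp_space_eq[OF sets_rho] by (simp add: space_restrict_space)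

lemma borel_measurable_continuous_on_X: "continuous_on X g \<Longrightarrow> (g :: 'a \<Rightarrow> real) \<in> borel_measurable rho"
  using measurable_cong_sets[OF sets_rho refl] borel_measurable_continuous_on_restrict by blast

lemma integrable_continuous_on_X:
  fixes g :: "'a \<Rightarrow> real"
  assumes "continuous_on X g"
  shows "integrable rho g"
proof -
  obtain B where "\<forall>y\<in>X. norm (g y) \<le> B"
    using compact_imp_bounded[OF compact_continuous_image[OF assms compact_X]] by (auto simp: bounded_iff)
  then show ?thesis
    using assms by (intro integrable_const_bound[where B=B] AE_I2 borel_measurable_continuous_on_X) (auto simp: space_rho)
qed

lemma continuous_on_kernel: "continuous_on (X \<times> X) (\<lambda>(x, y). k x y)"
  using pd_kernel by (simp add: pd_kernel_def)

lemma kernel_sym: "x \<in> X \<Longrightarrow> y \<in> X \<Longrightarrow> k x y = k y x"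
  using pd_kernel by (simp add: pd_kernel_def)

lemma continuous_on_kernel_slice: "x \<in> X \<Longrightarrow> continuous_on X (k x)"
  by (rule continuous_on_compose2[OF continuous_on_kernel, of _ "\<lambda>y. (x, y)", simplified])
     (auto intro!: continuous_on_Pair continuous_on_const continuous_on_id)

lemma borel_measurable_kernel_slice: "x \<in> X \<Longrightarrow> k x \<in> borel_measurable rho"
  by (intro borel_measurable_continuous_on_X continuous_on_kernel_slice)

lemma kernel_bounded: obtains C where "C \<ge> 0" "\<And>x y. x \<in> X \<Longrightarrow> y \<in> X \<Longrightarrow> \<bar>k x y\<bar> \<le> C"
proof -
  have "bounded ((\<lambda>(x, y). k x y) ` (X \<times> X))"
    by (intro compact_imp_bounded compact_continuous_image continuous_on_kernel compact_Times compact_X)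
  then obtain C where "\<forall>v\<in>(\<lambda>(x, y). k x y) ` (X \<times> X). \<bar>v\<bar> \<le> C"
    by (auto simp: bounded_iff)
  then show ?thesis by (intro that[of "max C 0"]) force+
qed

lemma kernel_uniformly_continuous:
  assumes "e > 0"
  obtains d where "d > 0" "\<And>a a' b. a \<in> X \<Longrightarrow> a' \<in> X \<Longrightarrow> b \<in> X \<Longrightarrow> dist a a' < d \<Longrightarrow>
     \<bar>k a b - k a' b\<bar> < e"
proof -
  have "uniformly_continuous_on (X \<times> X) (\<lambda>(x, y). k x y)"
    by (intro compact_uniformly_continuous continuous_on_kernel compact_Times compact_X)
  then obtain d where "d > 0" and d: "\<And>p p'. p \<in> X \<times> X \<Longrightarrow> p' \<in> X \<times> X \<Longrightarrow> dist p' p < d \<Longrightarrow>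
      dist ((\<lambda>(x, y). k x y) p') ((\<lambda>(x, y). k x y) p) < e"
    using assms unfolding uniformly_continuous_on_def by metis
  show ?thesis
  proof (rule that[OF \<open>d > 0\<close>])
    fix a a' b assume "a \<in> X" "a' \<in> X" "b \<in> X" "dist a a' < d"
    then show "\<bar>k a b - k a' b\<bar> < e"
      using d[of "(a', b)" "(a, b)"] by (simp add: dist_Pair_Pair dist_real_def dist_commute)
  qed
qed

text \<open>The kernel is only continuous on \<open>X \<times> X\<close>; its measurability on the product space is
  obtained from a continuous (Tietze) extension to the whole space.\<close>
lemma kernel_measurable_pair: "(\<lambda>(x, y). k x y) \<in> borel_measurable (rho \<Otimes>\<^sub>M rho)"
proof -
  have "closedin (top_of_set UNIV) (X \<times> X)"
    using compact_X by (simp add: closed_Times compact_imp_closed)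
  then obtain K where K: "continuous_on UNIV K" "\<And>p. p \<in> X \<times> X \<Longrightarrow> K p = (\<lambda>(x, y). k x y) p"
    using Tietze_unbounded[OF continuous_on_kernel] by metis
  have "K \<in> borel_measurable (rho \<Otimes>\<^sub>M rho)"
  proof -
    have "K \<in> borel_measurable (borel \<Otimes>\<^sub>M borel)"
      unfolding borel_prod using K(1) by (rule borel_measurable_continuous_onI)
    moreover have "(\<lambda>x. x) \<in> measurable rho borel"
      by (simp add: measurable_cong_sets[OF sets_rho refl] measurable_restrict_space1)
    then have "(\<lambda>p. p) \<in> measurable (rho \<Otimes>\<^sub>M rho) (borel \<Otimes>\<^sub>M borel)"
      by (simp add: measurable_pair_iff measurable_compose[OF measurable_fst] measurable_compose[OF measurable_snd] comp_def)
    ultimately show ?thesis by (rule measurable_compose[rotated])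
  qed
  then show ?thesis
    by (rule measurable_cong[THEN iffD1, rotated]) (use K(2) in \<open>auto simp: space_pair_measure space_rho\<close>)
qed

lemma integrable_mult_bounded:
  fixes h g :: "'a \<Rightarrow> real"
  assumes h: "integrable rho h" and g: "g \<in> borel_measurable rho" and B: "\<And>y. y \<in> X \<Longrightarrow> \<bar>g y\<bar> \<le> B"
  shows "integrable rho (\<lambda>y. h y * g y)" "\<bar>\<integral>y. h y * g y \<partial>rho\<bar> \<le> B * (\<integral>y. \<bar>h y\<bar> \<partial>rho)"
proof -
  have bnd: "\<bar>h y * g y\<bar> \<le> B * \<bar>h y\<bar>" if "y \<in> space rho" for y
    using mult_left_mono[OF B[of y] abs_ge_zero[of "h y"]] that by (simp add: space_rho abs_mult mult.commute)
  show int: "integrable rho (\<lambda>y. h y * g y)"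
    by (rule Bochner_Integration.integrable_bound[where f="\<lambda>y. B * \<bar>h y\<bar>"])
       (use h g bnd in \<open>auto intro!: AE_I2 order_trans[OF _ abs_ge_self]\<close>)
  have "\<bar>\<integral>y. h y * g y \<partial>rho\<bar> \<le> (\<integral>y. B * \<bar>h y\<bar> \<partial>rho)"
    using Bochner_Integration.integral_norm_bound_integral[OF int, of "\<lambda>y. B * \<bar>h y\<bar>"] h bnd by auto
  then show "\<bar>\<integral>y. h y * g y \<partial>rho\<bar> \<le> B * (\<integral>y. \<bar>h y\<bar> \<partial>rho)" by simp
qed

lemma integral_mult_diff_le:
  fixes h g g' :: "'a \<Rightarrow> real"
  assumes h: "integrable rho h" and [measurable]: "g \<in> borel_measurable rho" "g' \<in> borel_measurable rho"
    and "\<And>y. y \<in> X \<Longrightarrow> \<bar>g y\<bar> \<le> C" "\<And>y. y \<in> X \<Longrightarrow> \<bar>g' y\<bar> \<le> C"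
    and "\<And>y. y \<in> X \<Longrightarrow> \<bar>g y - g' y\<bar> \<le> B"
  shows "\<bar>(\<integral>y. h y * g y \<partial>rho) - (\<integral>y. h y * g' y \<partial>rho)\<bar> \<le> B * (\<integral>y. \<bar>h y\<bar> \<partial>rho)"
proof -
  have "integrable rho (\<lambda>y. h y * g y)" "integrable rho (\<lambda>y. h y * g' y)"
    using assms(4,5) by (auto intro!: integrable_mult_bounded(1)[OF h])
  then have "(\<integral>y. h y * g y \<partial>rho) - (\<integral>y. h y * g' y \<partial>rho) = (\<integral>y. h y * (g y - g' y) \<partial>rho)"
    by (simp add: right_diff_distrib)
  also have "\<bar>\<dots>\<bar> \<le> B * (\<integral>y. \<bar>h y\<bar> \<partial>rho)"
    using assms(6) by (intro integrable_mult_bounded(2)[OF h]) auto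
  finally show ?thesis .
qed

definition kernel_op :: "('a \<Rightarrow> real) \<Rightarrow> 'a \<Rightarrow> real" where
  "kernel_op h x = (\<integral>y. k x y * h y \<partial>rho)"

lemma kernel_op_eq: "kernel_op h x = (\<integral>y. h y * k x y \<partial>rho)"
  by (simp add: kernel_op_def mult.commute)

lemma integrable_kernel_mult:
  assumes "x \<in> X" "integrable rho h"
  shows "integrable rho (\<lambda>y. k x y * h y)"
proof -
  obtain C where "\<And>x y. x \<in> X \<Longrightarrow> y \<in> X \<Longrightarrow> \<bar>k x y\<bar> \<le> C" using kernel_bounded by blast
  then have "integrable rho (\<lambda>y. h y * k x y)"
    using assms by (intro integrable_mult_bounded(1) borel_measurable_kernel_slice)
  then show ?thesis by (simp add: mult.commute)
qed

lemma kernel_op_bounded: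
  assumes "integrable rho h" "\<And>x y. x \<in> X \<Longrightarrow> y \<in> X \<Longrightarrow> \<bar>k x y\<bar> \<le> C" "x \<in> X"
  shows "\<bar>kernel_op h x\<bar> \<le> C * (\<integral>y. \<bar>h y\<bar> \<partial>rho)"
  unfolding kernel_op_eq using assms by (intro integrable_mult_bounded(2) borel_measurable_kernel_slice)

lemma kernel_op_sum:
  assumes "\<And>l. l < N \<Longrightarrow> integrable rho (g l)" "x \<in> X"
  shows "kernel_op (\<lambda>y. \<Sum>l<N. c l * g l y) x = (\<Sum>l<N. c l * kernel_op (g l) x)"
proof -
  have "kernel_op (\<lambda>y. \<Sum>l<N. c l * g l y) x = (\<integral>y. (\<Sum>l<N. c l * (k x y * g l y)) \<partial>rho)"
    unfolding kernel_op_def by (simp add: sum_distrib_left mult.left_commute)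
  also have "\<dots> = (\<Sum>l<N. (\<integral>y. c l * (k x y * g l y) \<partial>rho))"
    using assms by (intro Bochner_Integration.integral_sum Bochner_Integration.integrable_mult_right integrable_kernel_mult) auto
  finally show ?thesis by (simp add: kernel_op_def)
qed

lemma continuous_on_kernel_op:
  assumes h: "integrable rho h"
  shows "continuous_on X (kernel_op h)"
  unfolding continuous_on_iff
proof (intro ballI allI impI)
  fix x and e :: real assume x: "x \<in> X" and "e > 0"
  obtain C where C: "\<And>x y. x \<in> X \<Longrightarrow> y \<in> X \<Longrightarrow> \<bar>k x y\<bar> \<le> C" using kernel_bounded by blast
  define A where "A = (\<integral>y. \<bar>h y\<bar> \<partial>rho)"
  have "A \<ge> 0" unfolding A_def by simp
  then obtain d where "d > 0" and d: "\<And>a a' b. a \<in> X \<Longrightarrow> a' \<in> X \<Longrightarrow> b \<in> X \<Longrightarrow> dist a a' < d \<Longrightarrow>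
     \<bar>k a b - k a' b\<bar> < e / (A + 1)"
    using kernel_uniformly_continuous[of "e / (A + 1)"] \<open>e > 0\<close> by (metis add_nonneg_pos zero_less_divide_iff zero_less_one)
  show "\<exists>d>0. \<forall>x'\<in>X. dist x' x < d \<longrightarrow> dist (kernel_op h x') (kernel_op h x) < e"
  proof (intro exI[of _ d] conjI ballI impI)
    fix x' assume x': "x' \<in> X" "dist x' x < d"
    have "\<bar>kernel_op h x' - kernel_op h x\<bar> \<le> e / (A + 1) * (\<integral>y. \<bar>h y\<bar> \<partial>rho)"
      unfolding kernel_op_eq using d[of x' x] x x'
      by (intro integral_mult_diff_le[OF h] borel_measurable_kernel_slice) (auto intro: C less_imp_le)
    also have "\<dots> = e / (A + 1) * A" by (simp add: A_def)
    also have "\<dots> < e" using \<open>e > 0\<close> \<open>A \<ge> 0\<close> by (simp add: field_simps)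
    finally show "dist (kernel_op h x') (kernel_op h x) < e" by (simp add: dist_real_def)
  qed (fact \<open>d > 0\<close>)
qed

lemma borel_measurable_kernel_op: "integrable rho h \<Longrightarrow> kernel_op h \<in> borel_measurable rho"
  by (intro borel_measurable_continuous_on_X continuous_on_kernel_op)

lemma kernel_op_symmetric:
  assumes p: "integrable rho p" and q: "integrable rho q"
  shows "(\<integral>x. p x * kernel_op q x \<partial>rho) = (\<integral>y. q y * kernel_op p y \<partial>rho)"
proof -
  interpret pair_sigma_finite rho rho ..
  obtain C where C: "C \<ge> 0" "\<And>x y. x \<in> X \<Longrightarrow> y \<in> X \<Longrightarrow> \<bar>k x y\<bar> \<le> C" using kernel_bounded by blast
  have [measurable]: "p \<in> borel_measurable rho" "q \<in> borel_measurable rho" using p q by auto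
  have [measurable]: "(\<lambda>(x, y). k x y) \<in> borel_measurable (rho \<Otimes>\<^sub>M rho)" by (fact kernel_measurable_pair)
  have "integrable (rho \<Otimes>\<^sub>M rho) (\<lambda>(x, y). C * (\<bar>p x\<bar> * \<bar>q y\<bar>))"
    by (intro Fubini_integrable AE_I2) (use p q in \<open>auto simp: abs_mult\<close>)
  then have "integrable (rho \<Otimes>\<^sub>M rho) (\<lambda>(x, y). p x * k x y * q y)"
  proof (rule Bochner_Integration.integrable_bound, goal_cases measurable bound)
    case bound
    have "\<bar>k x y\<bar> * (\<bar>p x\<bar> * \<bar>q y\<bar>) \<le> C * (\<bar>p x\<bar> * \<bar>q y\<bar>)" if "x \<in> X" "y \<in> X" for x y
      using C(2)[OF that] by (rule mult_right_mono) simp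
    then show ?case
      using C(1) by (intro AE_I2) (auto simp: space_pair_measure space_rho abs_mult mult_ac)
  qed simp
  then have "(\<integral>y. (\<integral>x. p x * k x y * q y \<partial>rho) \<partial>rho) = (\<integral>x. (\<integral>y. p x * k x y * q y \<partial>rho) \<partial>rho)"
    by (rule Fubini_integral)
  also have "\<dots> = (\<integral>x. p x * kernel_op q x \<partial>rho)"
    by (simp add: kernel_op_def mult.assoc)
  also have "(\<integral>y. (\<integral>x. p x * k x y * q y \<partial>rho) \<partial>rho) = (\<integral>y. q y * kernel_op p y \<partial>rho)"
  proof (intro Bochner_Integration.integral_cong refl)
    fix y assume "y \<in> space rho"
    then have "(\<integral>x. p x * k x y * q y \<partial>rho) = (\<integral>x. q y * (k y x * p x) \<partial>rho)"
      by (intro Bochner_Integration.integral_cong refl) (simp add: space_rho kernel_sym mult_ac)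
    then show "(\<integral>x. p x * k x y * q y \<partial>rho) = q y * kernel_op p y"
      by (simp add: kernel_op_def)
  qed
  finally show ?thesis ..
qed

section \<open>Discretisation of the integral operator\<close>

definition kernel_quantizer :: "real \<Rightarrow> nat \<Rightarrow> (nat \<Rightarrow> 'a) \<Rightarrow> ('a \<Rightarrow> nat) \<Rightarrow> bool" where
  "kernel_quantizer e m z f \<longleftrightarrow> (\<forall>i<m. z i \<in> X) \<and> f \<in> measurable rho (count_space UNIV) \<and>
     (\<forall>y\<in>X. f y < m \<and> (\<forall>b\<in>X. \<bar>k (z (f y)) b - k y b\<bar> \<le> e))"

lemma kernel_quantizer_exists:
  assumes "e > 0"
  obtains m z f where "kernel_quantizer e m z f"
proof -
  obtain d where "d > 0" and d: "\<And>a a' b. a \<in> X \<Longrightarrow> a' \<in> X \<Longrightarrow> b \<in> X \<Longrightarrow> dist a a' < d \<Longrightarrow>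
     \<bar>k a b - k a' b\<bar> < e"
    using kernel_uniformly_continuous[OF assms] by metis
  obtain T where T: "T \<subseteq> X" "finite T" "X \<subseteq> (\<Union>c\<in>T. ball c d)"
    using compactE_image[OF compact_X, of X "\<lambda>c. ball c d"] \<open>d > 0\<close> by force
  then obtain z and m :: nat where zm: "T = z ` {i. i < m}"
    using finite_imp_nat_seg_image_inj_on by metis
  define f where "f y = (LEAST i. i < m \<and> dist y (z i) < d)" for y
  have f: "f \<in> measurable rho (count_space UNIV)"
  proof -
    have [measurable]: "(\<lambda>y. dist y (z i)) \<in> borel_measurable rho" for i
      by (intro borel_measurable_continuous_on_X continuous_intros)
    show ?thesis unfolding f_def by measurable
  qed
  have near: "f y < m \<and> dist y (z (f y)) < d" if "y \<in> X" for y
  proof -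
    obtain i where "i < m" "dist y (z i) < d" using T zm \<open>y \<in> X\<close> by (force simp: dist_commute)
    then show ?thesis unfolding f_def by (metis (mono_tags, lifting) LeastI)
  qed
  have "\<forall>i<m. z i \<in> X" using T zm by auto
  moreover have "\<forall>y\<in>X. f y < m \<and> (\<forall>b\<in>X. \<bar>k (z (f y)) b - k y b\<bar> \<le> e)"
  proof (intro ballI conjI)
    fix y b assume "y \<in> X" "b \<in> X"
    moreover have "z (f y) \<in> X" using \<open>\<forall>i<m. z i \<in> X\<close> near[OF \<open>y \<in> X\<close>] by blast
    ultimately show "\<bar>k (z (f y)) b - k y b\<bar> \<le> e"
      using d[of "z (f y)" y b] near[OF \<open>y \<in> X\<close>] by (simp add: dist_commute)
  qed (use near in blast)
  ultimately show ?thesis using f by (intro that) (simp add: kernel_quantizer_def)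
qed

lemma kernel_quantizerD:
  assumes "kernel_quantizer e m z f" "y \<in> X"
  shows "f y < m" "z (f y) \<in> X" "\<And>b. b \<in> X \<Longrightarrow> \<bar>k (z (f y)) b - k y b\<bar> \<le> e"
  using assms unfolding kernel_quantizer_def by auto

lemma borel_measurable_quantized [measurable_dest]:
  "kernel_quantizer e m z f \<Longrightarrow> (\<lambda>y. G (f y) :: real) \<in> borel_measurable rho"
  unfolding kernel_quantizer_def by (auto intro: measurable_compose[of f _ "count_space UNIV"])

lemma sum_cell_integrals:
  fixes G :: "nat \<Rightarrow> real"
  assumes Q: "kernel_quantizer e m z f" and h: "integrable rho h"
  shows "(\<Sum>i<m. (\<integral>y. (if f y = i then h y else 0) \<partial>rho) * G i) = (\<integral>y. h y * G (f y) \<partial>rho)"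
proof -
  have [measurable]: "f \<in> measurable rho (count_space UNIV)" "h \<in> borel_measurable rho"
    using Q h unfolding kernel_quantizer_def by auto
  have int: "integrable rho (\<lambda>y. if f y = i then h y else 0)" for i
    by (rule Bochner_Integration.integrable_bound[OF h]) auto
  have "(\<Sum>i<m. (\<integral>y. (if f y = i then h y else 0) \<partial>rho) * G i)
      = (\<integral>y. (\<Sum>i<m. (if f y = i then h y else 0) * G i) \<partial>rho)"
    using int by (simp add: Bochner_Integration.integral_sum)
  also have "\<dots> = (\<integral>y. h y * G (f y) \<partial>rho)"
    using kernel_quantizerD(1)[OF Q]
    by (intro Bochner_Integration.integral_cong refl) (simp add: space_rho if_distrib[of "\<lambda>v. v * G _"] sum.delta' cong: if_cong)
  finally show ?thesis .
qed

text \<open>Moving each \<open>y\<close> to the centre \<open>z (f y)\<close> of its cell turns \<open>kernel_op h\<close> into the finite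
  expansion \<open>\<Sum>\<^sub>i (\<integral>\<^bsub>f = i\<^esub> h) k(z\<^sub>i, \<cdot>)\<close>.\<close>
definition quantized_krep :: "('a \<Rightarrow> real) \<Rightarrow> nat \<Rightarrow> (nat \<Rightarrow> 'a) \<Rightarrow> ('a \<Rightarrow> nat) \<Rightarrow> 'a krep" where
  "quantized_krep h m z f = ((\<lambda>i. \<integral>y. (if f y = i then h y else 0) \<partial>rho), z, m)"

lemma krep_eval_quantized:
  "kernel_quantizer e m z f \<Longrightarrow> integrable rho h \<Longrightarrow>
     krep_eval k (quantized_krep h m z f) x = (\<integral>y. h y * k (z (f y)) x \<partial>rho)"
  unfolding krep_eval_def quantized_krep_def by (simp add: sum_cell_integrals)

lemma krep_ip_quantized:
  assumes "kernel_quantizer e m z f" "kernel_quantizer e' m' z' f'" "integrable rho h"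
  shows "krep_ip k (quantized_krep h m z f) (quantized_krep h m' z' f')
    = (\<integral>y. h y * (\<integral>w. h w * k (z (f y)) (z' (f' w)) \<partial>rho) \<partial>rho)"
proof -
  have "krep_ip k (quantized_krep h m z f) (quantized_krep h m' z' f')
      = (\<Sum>i<m. (\<integral>y. (if f y = i then h y else 0) \<partial>rho) *
           (\<Sum>j<m'. (\<integral>w. (if f' w = j then h w else 0) \<partial>rho) * k (z i) (z' j)))"
    unfolding krep_ip_def quantized_krep_def by (simp add: sum_distrib_left mult.assoc)
  then show ?thesis using assms by (simp add: sum_cell_integrals)
qed

lemma quantized_eval_approx:
  assumes Q: "kernel_quantizer e m z f" and h: "integrable rho h" and x: "x \<in> X"
  shows "\<bar>krep_eval k (quantized_krep h m z f) x - kernel_op h x\<bar> \<le> e * (\<integral>y. \<bar>h y\<bar> \<partial>rho)"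
proof -
  obtain C where C: "\<And>x y. x \<in> X \<Longrightarrow> y \<in> X \<Longrightarrow> \<bar>k x y\<bar> \<le> C" using kernel_bounded by blast
  have "\<bar>k (z (f y)) x - k x y\<bar> \<le> e" if "y \<in> X" for y
    using kernel_quantizerD(3)[OF Q that x] kernel_sym[OF x that] by simp
  then show ?thesis
    unfolding krep_eval_quantized[OF Q h] kernel_op_eq using kernel_quantizerD(2)[OF Q] x
    by (intro integral_mult_diff_le[OF h borel_measurable_quantized[OF Q] borel_measurable_kernel_slice[OF x]])
       (auto intro: C)
qed

lemma quantized_ip_approx:
  assumes Q: "kernel_quantizer e m z f" and Q': "kernel_quantizer e' m' z' f'" and h: "integrable rho h"
  shows "\<bar>krep_ip k (quantized_krep h m z f) (quantized_krep h m' z' f') - (\<integral>y. h y * kernel_op h y \<partial>rho)\<bar>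
    \<le> (e + e') * (\<integral>y. \<bar>h y\<bar> \<partial>rho) * (\<integral>y. \<bar>h y\<bar> \<partial>rho)"
proof -
  obtain C where C: "\<And>x y. x \<in> X \<Longrightarrow> y \<in> X \<Longrightarrow> \<bar>k x y\<bar> \<le> C" using kernel_bounded by blast
  define A where "A = (\<integral>y. \<bar>h y\<bar> \<partial>rho)"
  define G where "G y = (\<integral>w. h w * k (z (f y)) (z' (f' w)) \<partial>rho)" for y
  have [measurable]: "h \<in> borel_measurable rho" "kernel_op h \<in> borel_measurable rho"
    using h by (auto intro: borel_measurable_kernel_op)
  have [measurable]: "G \<in> borel_measurable rho"
    unfolding G_def using Q by measurable
  have slice: "(\<lambda>w. k (z (f y)) (z' (f' w))) \<in> borel_measurable rho" for y
    by (rule borel_measurable_quantized[OF Q', where G="\<lambda>i. k (z (f y)) (z' i)"])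
  have "\<bar>G y - kernel_op h y\<bar> \<le> (e + e') * A" if y: "y \<in> X" for y
  proof -
    have "\<bar>k (z (f y)) (z' (f' w)) - k y w\<bar> \<le> e + e'" if w: "w \<in> X" for w
    proof -
      have "\<bar>k (z (f y)) (z' (f' w)) - k y (z' (f' w))\<bar> \<le> e"
        using kernel_quantizerD[OF Q y] kernel_quantizerD[OF Q' w] by simp
      moreover have "\<bar>k y (z' (f' w)) - k y w\<bar> \<le> e'"
        using kernel_quantizerD(3)[OF Q' w y] kernel_quantizerD(2)[OF Q' w] kernel_sym[OF y] kernel_sym[OF y w]
        by simp
      ultimately show ?thesis by linarith
    qed
    then show ?thesis
      unfolding G_def kernel_op_eq A_def using kernel_quantizerD(2)[OF Q] kernel_quantizerD(2)[OF Q'] y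
      by (intro integral_mult_diff_le[OF h slice borel_measurable_kernel_slice[OF y]]) (auto intro: C)
  qed
  moreover have "\<bar>G y\<bar> \<le> C * A" if "y \<in> X" for y
    unfolding G_def A_def using kernel_quantizerD(2)[OF Q] kernel_quantizerD(2)[OF Q'] that
    by (intro integrable_mult_bounded(2)[OF h slice]) (auto intro: C)
  moreover have "\<bar>kernel_op h y\<bar> \<le> C * A" if "y \<in> X" for y
    unfolding A_def using kernel_op_bounded[OF h C that] .
  ultimately have "\<bar>(\<integral>y. h y * G y \<partial>rho) - (\<integral>y. h y * kernel_op h y \<partial>rho)\<bar> \<le> (e + e') * A * A"
    unfolding A_def by (intro integral_mult_diff_le[OF h]) (auto simp: h)
  then show ?thesis unfolding krep_ip_quantized[OF Q Q' h] G_def A_def .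
qed

lemma kernel_op_in_rkhs_ball:
  assumes h: "integrable rho h" and le1: "(\<integral>y. h y * kernel_op h y \<partial>rho) \<le> 1"
  shows "kernel_op h \<in> rkhs_ball X k"
proof -
  define A where "A = (\<integral>y. \<bar>h y\<bar> \<partial>rho)"
  have "A \<ge> 0" unfolding A_def by simp
  define ep :: "nat \<Rightarrow> real" where "ep n = inverse (real (Suc n))" for n
  have ep: "ep n > 0" for n unfolding ep_def by simp
  then have "\<forall>n. \<exists>m z f. kernel_quantizer (ep n) m z f"
    using kernel_quantizer_exists by metis
  then obtain M Z \<Phi> where Q: "\<And>n. kernel_quantizer (ep n) (M n) (Z n) (\<Phi> n)" by metis
  show ?thesis
  proof (rule rkhs_ballI[where F="\<lambda>n. quantized_krep h (M n) (Z n) (\<Phi> n)" and e="\<lambda>n. (A + A * A) * ep n"])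
    show "(\<lambda>n. (A + A * A) * ep n) \<longlonglongrightarrow> 0"
      unfolding ep_def by (intro tendsto_mult_right_zero LIMSEQ_inverse_real_of_nat)
    have "ep n * A \<le> (A + A * A) * ep n" for n
      using ep[of n] \<open>A \<ge> 0\<close> by (simp add: ring_distribs mult.commute)
    then show "\<bar>krep_eval k (quantized_krep h (M n) (Z n) (\<Phi> n)) x - kernel_op h x\<bar> \<le> (A + A * A) * ep n"
      if "x \<in> X" for x n
      using quantized_eval_approx[OF Q h that, of n] unfolding A_def by (smt (verit))
    have "(ep p + ep q) * A * A \<le> (A + A * A) * ep p + (A + A * A) * ep q" for p q
      using ep[of p] ep[of q] \<open>A \<ge> 0\<close> by (simp add: ring_distribs mult_ac)
    then show "\<bar>krep_ip k (quantized_krep h (M p) (Z p) (\<Phi> p)) (quantized_krep h (M q) (Z q) (\<Phi> q))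
        - (\<integral>y. h y * kernel_op h y \<partial>rho)\<bar> \<le> (A + A * A) * ep p + (A + A * A) * ep q" for p q
      using quantized_ip_approx[OF Q Q h, of p q] unfolding A_def by (smt (verit))
  qed (use Q le1 in \<open>auto simp: quantized_krep_def kernel_quantizer_def krep_in_def\<close>)
qed

section \<open>Continuous eigenfunctions\<close>

lemma eigenfunctions_orthogonal:
  assumes [measurable]: "p \<in> borel_measurable rho" "q \<in> borel_measurable rho"
    and "integrable rho (\<lambda>x. (p x)\<^sup>2)" "integrable rho (\<lambda>x. (q x)\<^sup>2)"
    and p_eig: "AE x in rho. kernel_op p x = mu * p x" and q_eig: "AE x in rho. kernel_op q x = nu * q x"
    and "mu \<noteq> nu"
  shows "(\<integral>x. p x * q x \<partial>rho) = 0"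
proof -
  have p: "integrable rho p" and q: "integrable rho q"
    using assms by (auto intro: square_integrable_imp_integrable)
  have [measurable]: "kernel_op p \<in> borel_measurable rho" "kernel_op q \<in> borel_measurable rho"
    using p q by (auto intro: borel_measurable_kernel_op)
  have "(\<integral>x. p x * kernel_op q x \<partial>rho) = (\<integral>x. nu * (p x * q x) \<partial>rho)"
    using q_eig by (intro integral_cong_AE) auto
  moreover have "(\<integral>x. q x * kernel_op p x \<partial>rho) = (\<integral>x. mu * (p x * q x) \<partial>rho)"
    using p_eig by (intro integral_cong_AE) auto
  ultimately have "nu * (\<integral>x. p x * q x \<partial>rho) = mu * (\<integral>x. p x * q x \<partial>rho)"
    using kernel_op_symmetric[OF p q] by (metis integral_mult_right_zero)
  then show ?thesis using \<open>mu \<noteq> nu\<close> by auto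
qed

text \<open>Eigenvalue \<open>lam l\<close> is assigned the eigenfunction number \<open>l - s\<close> of an orthonormal basis of its
  eigenspace, where \<open>s\<close> is the first index at which \<open>lam\<close> takes the value \<open>lam l\<close>.\<close>
lemma kernel_eigenvalues_orthonormal_family:
  assumes ke: "kernel_eigenvalues k rho lam" and pos: "\<forall>l<N. lam l > 0"
  obtains phi where
    "\<And>l. l < N \<Longrightarrow> phi l \<in> borel_measurable rho \<and> integrable rho (\<lambda>x. (phi l x)\<^sup>2) \<and>
       (AE x in rho. kernel_op (phi l) x = lam l * phi l x)"
    "\<And>l l'. l < N \<Longrightarrow> l' < N \<Longrightarrow> (\<integral>x. phi l x * phi l' x \<partial>rho) = (if l = l' then 1 else 0)"
proof -
  have anti: "antimono lam" and fin: "\<And>mu. mu > 0 \<Longrightarrow> finite {l. lam l = mu}"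
    and mult: "\<And>mu. mu > 0 \<Longrightarrow> eigen_mult k rho mu (card {l. lam l = mu})"
    using ke unfolding kernel_eigenvalues_def by auto
  define G where "G mu = (SOME g. eigen_onfamily k rho mu (card {l. lam l = mu}) g)" for mu
  have G: "eigen_onfamily k rho mu (card {l. lam l = mu}) (G mu)" if "mu > 0" for mu
    using mult[OF that] unfolding eigen_mult_def G_def by (metis someI_ex)
  define s where "s mu = (LEAST l. lam l = mu)" for mu
  define phi where "phi l = G (lam l) (l - s (lam l))" for l
  have s_le: "s (lam l) \<le> l" for l unfolding s_def by (rule Least_le) simp
  have idx: "l - s (lam l) < card {j. lam j = lam l}" if "l < N" for l
    unfolding s_def using anti fin pos that by (intro antimono_index_in_level_set) auto
  have eig: "phi l \<in> borel_measurable rho \<and> integrable rho (\<lambda>x. (phi l x)\<^sup>2) \<and>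
       (AE x in rho. kernel_op (phi l) x = lam l * phi l x)" if "l < N" for l
  proof -
    have "eigen_onfamily k rho (lam l) (card {j. lam j = lam l}) (G (lam l))"
      using G pos that by blast
    then show ?thesis
      using idx[OF that] unfolding eigen_onfamily_def phi_def kernel_op_def by blast
  qed
  show ?thesis
  proof (rule that[OF eig])
    fix l l' assume l: "l < N" and l': "l' < N"
    show "(\<integral>x. phi l x * phi l' x \<partial>rho) = (if l = l' then 1 else 0)"
    proof (cases "lam l = lam l'")
      case True
      have "(l - s (lam l) = l' - s (lam l)) = (l = l')" using s_le[of l] s_le[of l'] True by auto
      then show ?thesis
        using G[of "lam l"] pos l idx[OF l] idx[OF l'] True unfolding eigen_onfamily_def phi_def by auto
    next
      case False
      then show ?thesis using eigenfunctions_orthogonal eig[OF l] eig[OF l'] by auto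
    qed
  qed
qed

lemma continuous_eigenfunction:
  assumes p: "p \<in> borel_measurable rho" "integrable rho p"
    and eig: "AE x in rho. kernel_op p x = mu * p x" and "mu \<noteq> 0"
  shows "continuous_on X (\<lambda>x. kernel_op p x / mu)"
    and "AE x in rho. kernel_op p x / mu = p x"
    and "\<And>x. x \<in> X \<Longrightarrow> kernel_op (\<lambda>y. kernel_op p y / mu) x = mu * (kernel_op p x / mu)"
proof -
  show cont: "continuous_on X (\<lambda>x. kernel_op p x / mu)"
    by (intro continuous_on_divide continuous_on_kernel_op p continuous_on_const) (use \<open>mu \<noteq> 0\<close> in auto)
  show ae: "AE x in rho. kernel_op p x / mu = p x"
    using eig by eventually_elim (simp add: \<open>mu \<noteq> 0\<close>)
  show "kernel_op (\<lambda>y. kernel_op p y / mu) x = mu * (kernel_op p x / mu)" if x: "x \<in> X" for x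
  proof -
  have "kernel_op (\<lambda>y. kernel_op p y / mu) x = kernel_op p x"
    unfolding kernel_op_def[of "\<lambda>y. kernel_op p y / mu" x] kernel_op_def[of p x]
  proof (rule integral_cong_AE)
    show "AE y in rho. k x y * (kernel_op p y / mu) = k x y * p y"
      using ae by eventually_elim simp
    show "(\<lambda>y. k x y * (kernel_op p y / mu)) \<in> borel_measurable rho"
      by (intro borel_measurable_times borel_measurable_kernel_slice[OF x] borel_measurable_continuous_on_X[OF cont])
    show "(\<lambda>y. k x y * p y) \<in> borel_measurable rho"
      by (intro borel_measurable_times borel_measurable_kernel_slice[OF x] p(1))
  qed
  then show ?thesis using \<open>mu \<noteq> 0\<close> by simp
  qed
qed

definition eigen_system :: "(nat \<Rightarrow> real) \<Rightarrow> nat \<Rightarrow> (nat \<Rightarrow> 'a \<Rightarrow> real) \<Rightarrow> bool" where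
  "eigen_system lam N psi \<longleftrightarrow>
     (\<forall>l<N. continuous_on X (psi l) \<and> (\<forall>x\<in>X. kernel_op (psi l) x = lam l * psi l x)) \<and>
     (\<forall>l<N. \<forall>l'<N. (\<integral>x. psi l x * psi l' x \<partial>rho) = (if l = l' then 1 else 0))"

lemma kernel_eigenvalues_eigen_system:
  assumes ke: "kernel_eigenvalues k rho lam" and pos: "\<forall>l<N. lam l > 0"
  obtains psi where "eigen_system lam N psi"
proof -
  obtain phi where phi: "\<And>l. l < N \<Longrightarrow> phi l \<in> borel_measurable rho \<and> integrable rho (\<lambda>x. (phi l x)\<^sup>2) \<and>
       (AE x in rho. kernel_op (phi l) x = lam l * phi l x)"
    and orth: "\<And>l l'. l < N \<Longrightarrow> l' < N \<Longrightarrow> (\<integral>x. phi l x * phi l' x \<partial>rho) = (if l = l' then 1 else 0)"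
    using kernel_eigenvalues_orthonormal_family[OF assms] by blast
  define psi where "psi l x = kernel_op (phi l) x / lam l" for l x
  have psi: "continuous_on X (psi l) \<and> (AE x in rho. psi l x = phi l x) \<and>
      (\<forall>x\<in>X. kernel_op (psi l) x = lam l * psi l x)" if "l < N" for l
  proof -
    have "phi l \<in> borel_measurable rho" "AE x in rho. kernel_op (phi l) x = lam l * phi l x"
      using phi[OF that] by auto
    moreover have "integrable rho (phi l)"
      using phi[OF that] by (auto intro: square_integrable_imp_integrable)
    moreover have "lam l \<noteq> 0" using pos that by auto
    ultimately show ?thesis
      unfolding psi_def using continuous_eigenfunction[of "phi l" "lam l"] by blast
  qed
  have meas: "psi j \<in> borel_measurable rho" "phi j \<in> borel_measurable rho" if "j < N" for j
    using psi[OF that] phi[OF that] borel_measurable_continuous_on_X by auto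
  have psi_orth: "(\<integral>x. psi l x * psi l' x \<partial>rho) = (if l = l' then 1 else 0)" if "l < N" "l' < N" for l l'
  proof -
    have "(\<integral>x. psi l x * psi l' x \<partial>rho) = (\<integral>x. phi l x * phi l' x \<partial>rho)"
    proof (rule integral_cong_AE)
      have "AE x in rho. psi l x = phi l x" "AE x in rho. psi l' x = phi l' x"
        using psi that by auto
      then show "AE x in rho. psi l x * psi l' x = phi l x * phi l' x" by eventually_elim simp
    qed (use meas that in auto)
    then show ?thesis using orth that by simp
  qed
  have "eigen_system lam N psi"
    unfolding eigen_system_def using psi psi_orth by blast
  then show ?thesis by (rule that)
qed

lemma eigen_systemD:
  assumes "eigen_system lam N psi" "l < N"
  shows "continuous_on X (psi l)" "integrable rho (psi l)" "\<And>x. x \<in> X \<Longrightarrow> kernel_op (psi l) x = lam l * psi l x"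
    and "\<And>l'. l' < N \<Longrightarrow> integrable rho (\<lambda>x. psi l x * psi l' x)"
    and "\<And>l'. l' < N \<Longrightarrow> (\<integral>x. psi l x * psi l' x \<partial>rho) = (if l = l' then 1 else 0)"
  using assms by (auto simp: eigen_system_def intro!: integrable_continuous_on_X continuous_on_mult)

lemma eigen_combination_in_rkhs_ball:
  assumes sys: "eigen_system lam N psi" and pos: "\<forall>l<N. lam l > 0" and b: "(\<Sum>l<N. (b l)\<^sup>2) \<le> 1"
  obtains f where "f \<in> rkhs_ball X k" "\<And>x. x \<in> X \<Longrightarrow> f x = (\<Sum>l<N. b l * sqrt (lam l) * psi l x)"
proof -
  have sqrt_lam: "b l / sqrt (lam l) * lam l = b l * sqrt (lam l)" if "l < N" for l
  proof -
    have "b l / sqrt (lam l) * lam l = b l * (lam l / sqrt (lam l))" by simp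
    also have "\<dots> = b l * sqrt (lam l)" using pos that by (subst real_div_sqrt) (auto simp: less_imp_le)
    finally show ?thesis .
  qed
  define h where "h y = (\<Sum>l<N. b l / sqrt (lam l) * psi l y)" for y
  have h: "integrable rho h"
    unfolding h_def using eigen_systemD(2)[OF sys] by auto
  have Kh: "kernel_op h x = (\<Sum>l<N. b l * sqrt (lam l) * psi l x)" if x: "x \<in> X" for x
  proof -
    have "kernel_op h x = (\<Sum>l<N. b l / sqrt (lam l) * kernel_op (psi l) x)"
      unfolding h_def using eigen_systemD(2)[OF sys] x by (rule kernel_op_sum)
    also have "\<dots> = (\<Sum>l<N. b l * sqrt (lam l) * psi l x)"
      using eigen_systemD(3)[OF sys _ x] sqrt_lam by (intro sum.cong refl) (simp flip: mult.assoc)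
    finally show ?thesis .
  qed
  have "(\<integral>y. h y * kernel_op h y \<partial>rho) = (\<integral>y. h y * (\<Sum>l<N. b l * sqrt (lam l) * psi l y) \<partial>rho)"
    by (intro Bochner_Integration.integral_cong refl) (simp add: Kh space_rho)
  also have "\<dots> = (\<Sum>l<N. b l / sqrt (lam l) * (b l * sqrt (lam l)))"
    unfolding h_def using eigen_systemD(4,5)[OF sys] by (intro integral_orthonormal_combination) auto
  also have "\<dots> = (\<Sum>l<N. (b l)\<^sup>2)"
    using pos by (intro sum.cong refl) (simp add: power2_eq_square less_imp_neq[symmetric])
  finally have "kernel_op h \<in> rkhs_ball X k" using b by (intro kernel_op_in_rkhs_ball h) simp
  then show ?thesis using Kh by (rule that)
qed

lemma eigen_projection_le_sup:
  assumes sys: "eigen_system lam N psi" and pos: "\<forall>l<N. lam l > 0" and "finite M"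
    and orth: "\<forall>m\<in>M. \<forall>m'\<in>M. (\<Sum>l<N. B m l * B m' l) = (if m = m' then 1 else 0)"
    and perp: "\<forall>m\<in>M. \<forall>i<n. (\<Sum>l<N. B m l * (sqrt (lam l) * psi l (xs i))) = 0"
    and xs: "\<forall>i<n. xs i \<in> X" and x: "x \<in> X"
  shows "ennreal (\<Sum>m\<in>M. (\<Sum>l<N. B m l * (sqrt (lam l) * psi l x))\<^sup>2)
    \<le> (SUP f\<in>{f \<in> rkhs_ball X k. \<forall>i<n. f (xs i) = 0}. ennreal ((f x)\<^sup>2))"
proof -
  define u where "u l y = sqrt (lam l) * psi l y" for l y
  obtain b where b: "(\<Sum>l<N. (b l)\<^sup>2) \<le> 1"
    and b_perp: "\<And>a. \<forall>m\<in>M. (\<Sum>l<N. B m l * a l) = 0 \<Longrightarrow> (\<Sum>l<N. b l * a l) = 0"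
    and b_val: "(\<Sum>l<N. b l * u l x)\<^sup>2 = (\<Sum>m\<in>M. (\<Sum>l<N. B m l * u l x)\<^sup>2)"
    using orthonormal_span_attains_projection[where M=M and T=N and B=B and u="\<lambda>l. u l x"] \<open>finite M\<close> orth
    by blast
  obtain f where f: "f \<in> rkhs_ball X k"
    and f_expansion: "\<And>y. y \<in> X \<Longrightarrow> f y = (\<Sum>l<N. b l * sqrt (lam l) * psi l y)"
    using eigen_combination_in_rkhs_ball[OF sys pos b] by blast
  have f_eq: "f y = (\<Sum>l<N. b l * u l y)" if "y \<in> X" for y
    using f_expansion[OF that] by (simp add: u_def mult.assoc)
  have "f (xs i) = 0" if "i < n" for i
    using perp that f_eq xs by (simp add: b_perp u_def)
  then have "ennreal ((f x)\<^sup>2) \<le> (SUP f\<in>{f \<in> rkhs_ball X k. \<forall>i<n. f (xs i) = 0}. ennreal ((f x)\<^sup>2))"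
    using f by (intro SUP_upper) simp
  then show ?thesis using f_eq[OF x] b_val by (simp add: u_def)
qed

lemma integral_square_eigen_combination:
  assumes sys: "eigen_system lam N psi" and pos: "\<forall>l<N. lam l > 0"
  shows "(\<integral>x. (\<Sum>l<N. c l * (sqrt (lam l) * psi l x))\<^sup>2 \<partial>rho) = (\<Sum>l<N. (c l)\<^sup>2 * lam l)"
proof -
  have "(\<integral>x. (\<Sum>l<N. c l * (sqrt (lam l) * psi l x))\<^sup>2 \<partial>rho)
      = (\<integral>x. (\<Sum>l<N. c l * sqrt (lam l) * psi l x) * (\<Sum>l<N. c l * sqrt (lam l) * psi l x) \<partial>rho)"
    by (simp add: power2_eq_square mult.assoc)
  also have "\<dots> = (\<Sum>l<N. c l * sqrt (lam l) * (c l * sqrt (lam l)))"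
    using eigen_systemD(4,5)[OF sys] by (intro integral_orthonormal_combination) auto
  also have "\<dots> = (\<Sum>l<N. (c l)\<^sup>2 * lam l)"
    using pos by (intro sum.cong refl) (simp add: power2_eq_square less_imp_le)
  finally show ?thesis .
qed

lemma eigenvalue_tail_le_integral_sup:
  assumes ke: "kernel_eigenvalues k rho lam" and pos: "\<forall>l<N. lam l > 0" and xs: "\<forall>i<n. xs i \<in> X"
  shows "ennreal (\<Sum>m\<in>{n..<N}. lam m) \<le>
    (\<integral>\<^sup>+ x. (SUP f\<in>{f \<in> rkhs_ball X k. \<forall>i<n. f (xs i) = 0}. ennreal ((f x)\<^sup>2)) \<partial>rho)"
proof -
  obtain psi where sys: "eigen_system lam N psi"
    using kernel_eigenvalues_eigen_system[OF ke pos] by blast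
  obtain B :: "nat \<Rightarrow> nat \<Rightarrow> real" where
    B_triangular: "\<forall>m\<in>{n..<N}. \<forall>l>m. B m l = 0" and
    B_orth: "\<forall>m\<in>{n..<N}. \<forall>m'\<in>{n..<N}. (\<Sum>l<N. B m l * B m' l) = (if m = m' then 1 else 0)" and
    B_perp: "\<forall>m\<in>{n..<N}. \<forall>i<n. (\<Sum>l<N. sqrt (lam l) * psi l (xs i) * B m l) = 0"
    using orthonormal_triangular_family[where N=N and T=N and n=n and U="\<lambda>i l. sqrt (lam l) * psi l (xs i)"] by auto
  define w where "w m x = (\<Sum>l<N. B m l * (sqrt (lam l) * psi l x))" for m x
  have w_int: "integrable rho (\<lambda>x. (w m x)\<^sup>2)" for m
    unfolding w_def using eigen_systemD(1)[OF sys]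
    by (intro integrable_continuous_on_X continuous_intros) auto
  have "(\<Sum>m\<in>{n..<N}. lam m) \<le> (\<Sum>m\<in>{n..<N}. (\<integral>x. (w m x)\<^sup>2 \<partial>rho))"
    unfolding w_def integral_square_eigen_combination[OF sys pos] using ke B_orth B_triangular
    by (intro sum_mono antimono_le_weighted_sum) (auto simp: kernel_eigenvalues_def power2_eq_square)
  also have "\<dots> = (\<integral>x. (\<Sum>m\<in>{n..<N}. (w m x)\<^sup>2) \<partial>rho)"
    using w_int by (intro Bochner_Integration.integral_sum[symmetric])
  finally have "ennreal (\<Sum>m\<in>{n..<N}. lam m) \<le> (\<integral>\<^sup>+ x. ennreal (\<Sum>m\<in>{n..<N}. (w m x)\<^sup>2) \<partial>rho)"
    using w_int by (subst nn_integral_eq_integral) (auto intro!: ennreal_leI sum_nonneg)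
  also have "\<dots> \<le> (\<integral>\<^sup>+ x. (SUP f\<in>{f \<in> rkhs_ball X k. \<forall>i<n. f (xs i) = 0}. ennreal ((f x)\<^sup>2)) \<partial>rho)"
    unfolding w_def using B_orth B_perp xs
    by (intro nn_integral_mono eigen_projection_le_sup[OF sys pos]) (auto simp: space_rho mult.commute)
  finally show ?thesis .
qed

end

theorem mainTheorem8:
  fixes X :: "'a::euclidean_space set" and k :: "'a \<Rightarrow> 'a \<Rightarrow> real"
    and rho :: "'a measure" and lam :: "nat \<Rightarrow> real"
    and n :: nat and xs :: "nat \<Rightarrow> 'a"
  assumes "compact X"
    and "pd_kernel X k"
    and "prob_space rho"
    and "sets rho = sets (restrict_space borel X)"
    and "kernel_eigenvalues k rho lam"
    and "n \<ge> 1"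
    and "\<forall>i<n. xs i \<in> X"
  shows "(\<integral>\<^sup>+ x. (SUP f\<in>{f \<in> rkhs_ball X k. \<forall>i<n. f (xs i) = 0}. ennreal ((f x)\<^sup>2)) \<partial>rho)
           \<ge> (\<Sum>l. ennreal (lam (l + n)))"
proof -
  interpret kernel_space X k rho by (rule kernel_space.intro) (fact assms)+
  have anti: "antimono lam" and nonneg: "\<And>l. 0 \<le> lam l"
    using assms(5) by (auto simp: kernel_eigenvalues_def)
  have "(\<Sum>l<L. ennreal (lam (l + n))) \<le>
      (\<integral>\<^sup>+ x. (SUP f\<in>{f \<in> rkhs_ball X k. \<forall>i<n. f (xs i) = 0}. ennreal ((f x)\<^sup>2)) \<partial>rho)" for L
  proof -
    obtain N' where pos: "\<forall>l<N'. lam l > 0" and tail: "(\<Sum>m\<in>{n..<n + L}. lam m) = (\<Sum>m\<in>{n..<N'}. lam m)"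
      using antimono_positive_prefix[OF anti nonneg] by blast
    have "(\<Sum>l<L. ennreal (lam (l + n))) = ennreal (\<Sum>m\<in>{n..<n + L}. lam m)"
      using nonneg sum.shift_bounds_nat_ivl[of lam 0 n L] by (simp add: atLeast0LessThan add.commute)
    then show ?thesis
      using eigenvalue_tail_le_integral_sup[OF assms(5) pos assms(7)] tail by simp
  qed
  then show ?thesis unfolding suminf_eq_SUP by (intro SUP_least) simp
qed

end
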